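(* Let $m_1\in\mathbb N$, $\theta=(\theta_1,\dots,\theta_{m_1})$ with $\theta_i>0$, real numbers $d_1,\dots,d_{m_1}$, and a $C^1$ function $u=(u_1,\dots,u_{m_1})$ of $x\in\mathbb{R}^n$ with values in $[0,\infty)^{m_1}$. Then for every integer $p\ge2$, $$\sum_{|\beta|=p-1}\binom{p}{\beta}\theta^{\beta^2}\sum_{i=1}^{m_1}\theta_i^{2\beta_i+1}d_i\nabla u_i\cdot\nabla u^\beta=\sum_{|\beta|=p-2}\binom p\beta\theta^{\beta^2}u^\beta\sum_{l=1}^n\sum_{i,j=1}^{m_1}a_{i,j}\frac{\partial u_i}{\partial x_l}\frac{\partial u_j}{\partial x_l},$$ where, for each $\beta$, $(a_{i,j})$ is the symmetric $m_1\times m_1$ matrix with $a_{i,j}=\frac{d_i+d_j}{2}\theta_i^{2\beta_i+1}\theta_j^{2\beta_j+1}$ for $i\ne j$ and $a_{i,i}=d_i\theta_i^{4\beta_i+4}$.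
   Context: Sums are over $\beta\in\mathbb Z_+^{m_1}$ ($m_1$-tuples of nonnegative integers); $|\beta|=\sum_i\beta_i$, $\beta^2=(\beta_1^2,\dots,\beta_{m_1}^2)$, $z^\alpha=\prod_iz_i^{\alpha_i}$ with $0^0=1$, and $\binom{p}{\beta}=\frac{p!}{\beta_1!\cdots\beta_{m_1}!}$ (also used when $|\beta|<p$). *)

theory Defs
  imports "HOL-Analysis.Analysis"
begin

text \<open>Multi-indices \<beta> \<in> Z_+^m, encoded as functions nat => nat vanishing from m on;
  components are indexed by 0..<m.\<close>
definition multi_idx :: "nat \<Rightarrow> nat \<Rightarrow> (nat \<Rightarrow> nat) set" where
  "multi_idx m k = {\<beta>. (\<forall>j\<ge>m. \<beta> j = 0) \<and> (\<Sum>j<m. \<beta> j) = k}"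

text \<open>Multinomial coefficient p!/(\<beta>_1! ... \<beta>_m!) (also used when |\<beta>| < p).\<close>
definition multinom :: "nat \<Rightarrow> nat \<Rightarrow> (nat \<Rightarrow> nat) \<Rightarrow> real" where
  "multinom m p \<beta> = fact p / (\<Prod>j<m. fact (\<beta> j))"

definition mpow :: "nat \<Rightarrow> (nat \<Rightarrow> real) \<Rightarrow> (nat \<Rightarrow> nat) \<Rightarrow> real" where
  "mpow m z \<alpha> = (\<Prod>j<m. z j ^ \<alpha> j)"

definition pderiv_at :: "'n::finite \<Rightarrow> (real^'n \<Rightarrow> real) \<Rightarrow> real^'n \<Rightarrow> real" where
  "pderiv_at l f x = frechet_derivative f (at x) (axis l 1)"

definition grad_dot :: "(real^'n::finite \<Rightarrow> real) \<Rightarrow> (real^'n \<Rightarrow> real) \<Rightarrow> real^'n \<Rightarrow> real" where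
  "grad_dot f g x = (\<Sum>l\<in>UNIV. pderiv_at l f x * pderiv_at l g x)"

definition amat :: "(nat \<Rightarrow> real) \<Rightarrow> (nat \<Rightarrow> real) \<Rightarrow> (nat \<Rightarrow> nat) \<Rightarrow> nat \<Rightarrow> nat \<Rightarrow> real" where
  "amat \<theta> d \<beta> i j = (if i = j then d i * \<theta> i ^ (4 * \<beta> i + 4)
     else (d i + d j) / 2 * \<theta> i ^ (2 * \<beta> i + 1) * \<theta> j ^ (2 * \<beta> j + 1))"

end

theory Submission
  imports Defs
begin

(* Expanding the gradient of u^\<beta> by the product rule turns the left-hand side into a sum over
   |\<beta>| = p-1 of terms \<beta>_j u^(\<beta>-e_j) \<nabla>u_i.\<nabla>u_j. Substituting \<beta> = \<gamma> + e_j, the factor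
   \<gamma>_j + 1 cancels against the multinomial coefficient and \<theta>^((\<gamma>+e_j)^2) = \<theta>_j^(2\<gamma>_j+1) \<theta>^(\<gamma>^2),
   leaving a sum over |\<gamma>| = p-2 of u^\<gamma> \<Sum>_ij d_i W_ij with W symmetric. Replacing d_i by the
   average (d_i + d_j)/2 then produces exactly the matrix a. *)

lemma finite_multi_idx: "finite (multi_idx m k)"
proof -
  have "multi_idx m k \<subseteq> (\<lambda>g j. if j < m then g j else 0) ` ({..<m} \<rightarrow>\<^sub>E {..k})"
  proof
    fix \<beta> assume "\<beta> \<in> multi_idx m k"
    then have zero: "\<forall>j\<ge>m. \<beta> j = 0" and sum: "(\<Sum>j<m. \<beta> j) = k"
      by (auto simp: multi_idx_def)
    have "\<beta> j \<le> k" if "j < m" for j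
      using member_le_sum[of j "{..<m}" \<beta>] that sum by auto
    with zero show "\<beta> \<in> (\<lambda>g j. if j < m then g j else 0) ` ({..<m} \<rightarrow>\<^sub>E {..k})"
      by (intro image_eqI[where x="restrict \<beta> {..<m}"]) (auto simp: fun_eq_iff)
  qed
  then show ?thesis
    by (rule finite_subset) (auto intro: finite_PiE)
qed

lemma sum_fun_upd_add:
  fixes f :: "'a \<Rightarrow> 'b::comm_monoid_add"
  assumes "finite A" "j \<in> A"
  shows "sum (f(j := c + f j)) A = c + sum f A"
proof -
  have "sum (f(j := c + f j)) (A - {j}) = sum f (A - {j})"
    by (rule sum.cong) auto
  with assms show ?thesis
    by (simp add: sum.remove[of A j] add_ac)
qed

lemma prod_fun_upd_mult:
  fixes f :: "'a \<Rightarrow> 'b::comm_monoid_mult"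
  assumes "finite A" "j \<in> A"
  shows "prod (f(j := c * f j)) A = c * prod f A"
proof -
  have "prod (f(j := c * f j)) (A - {j}) = prod f (A - {j})"
    by (rule prod.cong) auto
  with assms show ?thesis
    by (simp add: prod.remove[of A j] mult_ac)
qed

lemma mpow_fun_upd:
  assumes "j < m"
  shows "mpow m z (\<beta>(j := n)) = z j ^ n * (\<Prod>k\<in>{..<m} - {j}. z k ^ \<beta> k)"
proof -
  have "(\<Prod>k\<in>{..<m} - {j}. z k ^ (\<beta>(j := n)) k) = (\<Prod>k\<in>{..<m} - {j}. z k ^ \<beta> k)"
    by (rule prod.cong) auto
  with assms show ?thesis
    unfolding mpow_def by (simp add: prod.remove[of "{..<m}" j])
qed

lemma pderiv_at_mpow:
  assumes "\<And>j. j < m \<Longrightarrow> u j differentiable (at x)"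
  shows "pderiv_at l (\<lambda>y. mpow m (\<lambda>j. u j y) \<beta>) x =
    (\<Sum>j<m. real (\<beta> j) * mpow m (\<lambda>j. u j x) (\<beta>(j := \<beta> j - 1)) * pderiv_at l (u j) x)"
proof -
  have "(u j has_derivative frechet_derivative (u j) (at x)) (at x)" if "j < m" for j
    using assms[OF that] frechet_derivative_works by blast
  then have "((\<lambda>y. \<Prod>j<m. u j y ^ \<beta> j) has_derivative
      (\<lambda>h. \<Sum>j<m. (real (\<beta> j) * frechet_derivative (u j) (at x) h * u j x ^ (\<beta> j - 1))
        * (\<Prod>k\<in>{..<m} - {j}. u k x ^ \<beta> k))) (at x)"
    by (intro has_derivative_prod has_derivative_power) auto
  then have "pderiv_at l (\<lambda>y. mpow m (\<lambda>j. u j y) \<beta>) x =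
      (\<Sum>j<m. (real (\<beta> j) * pderiv_at l (u j) x * u j x ^ (\<beta> j - 1))
        * (\<Prod>k\<in>{..<m} - {j}. u k x ^ \<beta> k))"
    unfolding pderiv_at_def mpow_def by (simp add: frechet_derivative_at[symmetric])
  also have "\<dots> = (\<Sum>j<m. real (\<beta> j) * mpow m (\<lambda>j. u j x) (\<beta>(j := \<beta> j - 1)) * pderiv_at l (u j) x)"
    by (intro sum.cong refl) (simp add: mpow_fun_upd mult_ac)
  finally show ?thesis .
qed

lemma grad_dot_mpow:
  assumes "\<And>j. j < m \<Longrightarrow> u j differentiable (at x)"
  shows "grad_dot f (\<lambda>y. mpow m (\<lambda>j. u j y) \<beta>) x =
    (\<Sum>j<m. real (\<beta> j) * mpow m (\<lambda>j. u j x) (\<beta>(j := \<beta> j - 1)) * grad_dot f (u j) x)"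
  unfolding grad_dot_def
  by (simp add: pderiv_at_mpow[OF assms] sum_distrib_left sum_distrib_right sum.swap[where A=UNIV] mult_ac)

lemma fun_upd_Suc_in_multi_idx_iff:
  assumes "j < m"
  shows "\<gamma>(j := Suc (\<gamma> j)) \<in> multi_idx m (Suc k) \<longleftrightarrow> \<gamma> \<in> multi_idx m k"
proof -
  have "(\<Sum>i<m. (\<gamma>(j := Suc (\<gamma> j))) i) = Suc (\<Sum>i<m. \<gamma> i)"
    using sum_fun_upd_add[of "{..<m}" j \<gamma> 1] assms by simp
  with assms show ?thesis
    unfolding multi_idx_def by auto
qed

lemma sum_multi_idx_Suc_reindex:
  fixes f :: "(nat \<Rightarrow> nat) \<Rightarrow> 'a::comm_monoid_add"
  assumes "j < m" and "\<And>\<beta>. \<beta> j = 0 \<Longrightarrow> f \<beta> = 0"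
  shows "(\<Sum>\<beta>\<in>multi_idx m (Suc k). f \<beta>) = (\<Sum>\<gamma>\<in>multi_idx m k. f (\<gamma>(j := Suc (\<gamma> j))))"
proof -
  have "bij_betw (\<lambda>\<gamma>. \<gamma>(j := Suc (\<gamma> j))) (multi_idx m k) {\<beta> \<in> multi_idx m (Suc k). \<beta> j \<noteq> 0}"
  proof (rule bij_betw_byWitness[where f'="\<lambda>\<beta>. \<beta>(j := \<beta> j - 1)"])
    show "(\<lambda>\<beta>. \<beta>(j := \<beta> j - 1)) ` {\<beta> \<in> multi_idx m (Suc k). \<beta> j \<noteq> 0} \<subseteq> multi_idx m k"
    proof (rule image_subsetI)
      fix \<beta> assume "\<beta> \<in> {\<beta> \<in> multi_idx m (Suc k). \<beta> j \<noteq> 0}"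
      then have "(\<beta>(j := \<beta> j - 1))(j := Suc ((\<beta>(j := \<beta> j - 1)) j)) \<in> multi_idx m (Suc k)"
        by simp
      then show "\<beta>(j := \<beta> j - 1) \<in> multi_idx m k"
        using fun_upd_Suc_in_multi_idx_iff[OF assms(1)] by blast
    qed
  qed (use fun_upd_Suc_in_multi_idx_iff[OF assms(1)] in auto)
  then have "(\<Sum>\<gamma>\<in>multi_idx m k. f (\<gamma>(j := Suc (\<gamma> j)))) = (\<Sum>\<beta>\<in>{\<beta> \<in> multi_idx m (Suc k). \<beta> j \<noteq> 0}. f \<beta>)"
    by (rule sum.reindex_bij_betw)
  also have "\<dots> = (\<Sum>\<beta>\<in>multi_idx m (Suc k). f \<beta>)"
    using assms(2) finite_multi_idx by (intro sum.mono_neutral_left) auto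
  finally show ?thesis ..
qed

definition mweight :: "nat \<Rightarrow> nat \<Rightarrow> (nat \<Rightarrow> real) \<Rightarrow> (nat \<Rightarrow> nat) \<Rightarrow> real" where
  "mweight m p \<theta> \<beta> = multinom m p \<beta> * (\<Prod>j<m. \<theta> j ^ (\<beta> j ^ 2))"

lemma multinom_fun_upd_Suc:
  assumes "j < m"
  shows "multinom m p (\<gamma>(j := Suc (\<gamma> j))) * real (Suc (\<gamma> j)) = multinom m p \<gamma>"
proof -
  have upd: "(\<lambda>k. fact ((\<gamma>(j := Suc (\<gamma> j))) k) :: real) = (\<lambda>k. fact (\<gamma> k))(j := real (Suc (\<gamma> j)) * fact (\<gamma> j))"
    by (simp add: fun_eq_iff)
  have "(\<Prod>k<m. fact ((\<gamma>(j := Suc (\<gamma> j))) k) :: real) = real (Suc (\<gamma> j)) * (\<Prod>k<m. fact (\<gamma> k))"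
    unfolding upd using assms by (intro prod_fun_upd_mult) auto
  moreover have "(\<Prod>k<m. fact (\<gamma> k) :: real) \<noteq> 0"
    by (simp add: prod_pos less_imp_neq[symmetric])
  ultimately show ?thesis
    unfolding multinom_def by simp
qed

lemma prod_power_square_fun_upd_Suc:
  fixes \<theta> :: "nat \<Rightarrow> real"
  assumes "j < m"
  shows "(\<Prod>k<m. \<theta> k ^ ((\<gamma>(j := Suc (\<gamma> j))) k ^ 2)) = \<theta> j ^ (2 * \<gamma> j + 1) * (\<Prod>k<m. \<theta> k ^ (\<gamma> k ^ 2))"
proof -
  have "Suc (\<gamma> j) ^ 2 = (2 * \<gamma> j + 1) + \<gamma> j ^ 2"
    by (simp add: power2_eq_square)
  then have "\<theta> j ^ (Suc (\<gamma> j) ^ 2) = \<theta> j ^ (2 * \<gamma> j + 1) * \<theta> j ^ (\<gamma> j ^ 2)"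
    by (simp only: power_add)
  then have upd: "(\<lambda>k. \<theta> k ^ ((\<gamma>(j := Suc (\<gamma> j))) k ^ 2)) = (\<lambda>k. \<theta> k ^ (\<gamma> k ^ 2))(j := \<theta> j ^ (2 * \<gamma> j + 1) * \<theta> j ^ (\<gamma> j ^ 2))"
    by (simp add: fun_eq_iff)
  show ?thesis
    unfolding upd using assms by (intro prod_fun_upd_mult) auto
qed

lemma mweight_fun_upd_Suc:
  assumes "j < m"
  shows "mweight m p \<theta> (\<gamma>(j := Suc (\<gamma> j))) * real (Suc (\<gamma> j)) = \<theta> j ^ (2 * \<gamma> j + 1) * mweight m p \<theta> \<gamma>"
proof -
  have "mweight m p \<theta> (\<gamma>(j := Suc (\<gamma> j))) * real (Suc (\<gamma> j)) =
      (multinom m p (\<gamma>(j := Suc (\<gamma> j))) * real (Suc (\<gamma> j))) * (\<Prod>k<m. \<theta> k ^ ((\<gamma>(j := Suc (\<gamma> j))) k ^ 2))"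
    by (simp only: mweight_def mult_ac)
  also have "\<dots> = \<theta> j ^ (2 * \<gamma> j + 1) * mweight m p \<theta> \<gamma>"
    unfolding multinom_fun_upd_Suc[OF assms] prod_power_square_fun_upd_Suc[OF assms] mweight_def
    by (simp only: mult_ac)
  finally show ?thesis .
qed

lemma sum_multi_idx_Suc_lower:
  "(\<Sum>\<beta>\<in>multi_idx m (Suc k). mweight m p \<theta> \<beta> *
      (\<Sum>j<m. real (\<beta> j) * mpow m z (\<beta>(j := \<beta> j - 1)) * H \<beta> j))
   = (\<Sum>\<gamma>\<in>multi_idx m k. mweight m p \<theta> \<gamma> * mpow m z \<gamma> *
      (\<Sum>j<m. \<theta> j ^ (2 * \<gamma> j + 1) * H (\<gamma>(j := Suc (\<gamma> j))) j))"
proof -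
  define F where "F j \<beta> = mweight m p \<theta> \<beta> * real (\<beta> j) * mpow m z (\<beta>(j := \<beta> j - 1)) * H \<beta> j" for j \<beta>
  have "(\<Sum>\<beta>\<in>multi_idx m (Suc k). mweight m p \<theta> \<beta> *
      (\<Sum>j<m. real (\<beta> j) * mpow m z (\<beta>(j := \<beta> j - 1)) * H \<beta> j))
      = (\<Sum>j<m. \<Sum>\<beta>\<in>multi_idx m (Suc k). F j \<beta>)"
    unfolding F_def by (simp add: sum_distrib_left sum.swap[of _ "multi_idx m (Suc k)"] mult_ac)
  also have "\<dots> = (\<Sum>j<m. \<Sum>\<gamma>\<in>multi_idx m k. F j (\<gamma>(j := Suc (\<gamma> j))))"
    by (intro sum.cong refl sum_multi_idx_Suc_reindex) (auto simp: F_def)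
  also have "\<dots> = (\<Sum>j<m. \<Sum>\<gamma>\<in>multi_idx m k. \<theta> j ^ (2 * \<gamma> j + 1) * mweight m p \<theta> \<gamma> *
      mpow m z \<gamma> * H (\<gamma>(j := Suc (\<gamma> j))) j)"
  proof (intro sum.cong refl)
    fix j \<gamma> assume "j \<in> {..<m}"
    then show "F j (\<gamma>(j := Suc (\<gamma> j))) = \<theta> j ^ (2 * \<gamma> j + 1) * mweight m p \<theta> \<gamma> *
        mpow m z \<gamma> * H (\<gamma>(j := Suc (\<gamma> j))) j"
      using mweight_fun_upd_Suc[of j m p \<theta> \<gamma>] by (simp add: F_def mult_ac del: of_nat_Suc)
  qed
  also have "\<dots> = (\<Sum>\<gamma>\<in>multi_idx m k. mweight m p \<theta> \<gamma> * mpow m z \<gamma> *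
      (\<Sum>j<m. \<theta> j ^ (2 * \<gamma> j + 1) * H (\<gamma>(j := Suc (\<gamma> j))) j))"
    by (simp add: sum_distrib_left sum.swap[of _ "{..<m}"] mult_ac)
  finally show ?thesis .
qed

lemma sum_sum_average_sym:
  fixes W :: "'a \<Rightarrow> 'a \<Rightarrow> 'b::field_char_0"
  assumes "\<And>i j. W i j = W j i"
  shows "(\<Sum>i\<in>A. \<Sum>j\<in>A. d i * W i j) = (\<Sum>i\<in>A. \<Sum>j\<in>A. (d i + d j) / 2 * W i j)"
proof -
  have "(\<Sum>i\<in>A. \<Sum>j\<in>A. d j * W i j) = (\<Sum>i\<in>A. \<Sum>j\<in>A. d i * W i j)"
    using assms by (subst sum.swap) simp
  moreover have "(\<Sum>i\<in>A. \<Sum>j\<in>A. (d i + d j) / 2 * W i j) =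
      ((\<Sum>i\<in>A. \<Sum>j\<in>A. d i * W i j) + (\<Sum>i\<in>A. \<Sum>j\<in>A. d j * W i j)) / 2"
    by (simp add: sum.distrib sum_divide_distrib algebra_simps add_divide_distrib)
  ultimately show ?thesis
    by simp
qed

lemma sum_amat_eq_shifted:
  assumes G_sym: "\<And>i j. G i j = G j i"
  shows "(\<Sum>j<m. \<theta> j ^ (2 * \<gamma> j + 1) *
      (\<Sum>i<m. \<theta> i ^ (2 * (\<gamma>(j := Suc (\<gamma> j))) i + 1) * d i * G i j))
    = (\<Sum>i<m. \<Sum>j<m. amat \<theta> d \<gamma> i j * G i j)"
proof -
  define W where "W i j = \<theta> i ^ (2 * (\<gamma>(j := Suc (\<gamma> j))) i + 1) * \<theta> j ^ (2 * \<gamma> j + 1) * G i j" for i j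
  \<comment> \<open>the shift by e_j only changes the diagonal entries, so W stays symmetric\<close>
  have W_sym: "W i j = W j i" for i j
    by (cases "i = j") (auto simp: W_def G_sym)
  have amat_W: "amat \<theta> d \<gamma> i j * G i j = (d i + d j) / 2 * W i j" for i j
  proof (cases "i = j")
    case True
    have "4 * \<gamma> j + 4 = (2 * Suc (\<gamma> j) + 1) + (2 * \<gamma> j + 1)"
      by simp
    then have "\<theta> j ^ (4 * \<gamma> j + 4) = \<theta> j ^ (2 * Suc (\<gamma> j) + 1) * \<theta> j ^ (2 * \<gamma> j + 1)"
      by (simp only: power_add)
    with True show ?thesis
      by (simp add: amat_def W_def)
  qed (simp add: amat_def W_def)
  have "(\<Sum>j<m. \<theta> j ^ (2 * \<gamma> j + 1) *
      (\<Sum>i<m. \<theta> i ^ (2 * (\<gamma>(j := Suc (\<gamma> j))) i + 1) * d i * G i j))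
      = (\<Sum>j<m. \<Sum>i<m. d i * W i j)"
    by (simp add: W_def sum_distrib_left mult_ac)
  also have "\<dots> = (\<Sum>i<m. \<Sum>j<m. d i * W i j)"
    by (rule sum.swap)
  also have "\<dots> = (\<Sum>i<m. \<Sum>j<m. amat \<theta> d \<gamma> i j * G i j)"
    by (simp add: sum_sum_average_sym[OF W_sym] amat_W)
  finally show ?thesis .
qed

lemma mweight_gradient_identity:
  assumes "\<And>i j. G i j = G j i"
  shows "(\<Sum>\<beta>\<in>multi_idx m (Suc k). mweight m p \<theta> \<beta> *
      (\<Sum>i<m. \<theta> i ^ (2 * \<beta> i + 1) * d i *
        (\<Sum>j<m. real (\<beta> j) * mpow m z (\<beta>(j := \<beta> j - 1)) * G i j)))
   = (\<Sum>\<gamma>\<in>multi_idx m k. mweight m p \<theta> \<gamma> * mpow m z \<gamma> *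
      (\<Sum>i<m. \<Sum>j<m. amat \<theta> d \<gamma> i j * G i j))"
proof -
  define H where "H \<beta> j = (\<Sum>i<m. \<theta> i ^ (2 * \<beta> i + 1) * d i * G i j)" for \<beta> j
  have swap: "(\<Sum>i<m. \<theta> i ^ (2 * \<beta> i + 1) * d i * (\<Sum>j<m. real (\<beta> j) * mpow m z (\<beta>(j := \<beta> j - 1)) * G i j))
      = (\<Sum>j<m. real (\<beta> j) * mpow m z (\<beta>(j := \<beta> j - 1)) * H \<beta> j)" for \<beta>
    unfolding H_def sum_distrib_left by (subst sum.swap) (simp add: mult_ac)
  have "(\<Sum>\<beta>\<in>multi_idx m (Suc k). mweight m p \<theta> \<beta> *
      (\<Sum>i<m. \<theta> i ^ (2 * \<beta> i + 1) * d i *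
        (\<Sum>j<m. real (\<beta> j) * mpow m z (\<beta>(j := \<beta> j - 1)) * G i j)))
      = (\<Sum>\<beta>\<in>multi_idx m (Suc k). mweight m p \<theta> \<beta> *
      (\<Sum>j<m. real (\<beta> j) * mpow m z (\<beta>(j := \<beta> j - 1)) * H \<beta> j))"
    by (simp only: swap)
  also have "\<dots> = (\<Sum>\<gamma>\<in>multi_idx m k. mweight m p \<theta> \<gamma> * mpow m z \<gamma> *
      (\<Sum>j<m. \<theta> j ^ (2 * \<gamma> j + 1) * H (\<gamma>(j := Suc (\<gamma> j))) j))"
    by (rule sum_multi_idx_Suc_lower)
  also have "\<dots> = (\<Sum>\<gamma>\<in>multi_idx m k. mweight m p \<theta> \<gamma> * mpow m z \<gamma> *
      (\<Sum>i<m. \<Sum>j<m. amat \<theta> d \<gamma> i j * G i j))"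
    unfolding H_def by (simp only: sum_amat_eq_shifted[OF assms])
  finally show ?thesis .
qed

theorem lemmaA2:
  fixes m1 p :: nat and \<theta> d :: "nat \<Rightarrow> real" and u :: "nat \<Rightarrow> real^'n::finite \<Rightarrow> real"
    and x :: "real^'n"
  assumes m1: "m1 \<ge> 1"
    and theta_pos: "\<And>i. i < m1 \<Longrightarrow> \<theta> i > 0"
    and u_diff: "\<And>i y. i < m1 \<Longrightarrow> u i differentiable (at y)"
    and u_C1: "\<And>i. i < m1 \<Longrightarrow> continuous_on UNIV (\<lambda>y. frechet_derivative (u i) (at y))"
    and u_nonneg: "\<And>i y. i < m1 \<Longrightarrow> u i y \<ge> 0"
    and p: "p \<ge> 2"
  shows "(\<Sum>\<beta>\<in>multi_idx m1 (p - 1).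
            multinom m1 p \<beta> * (\<Prod>j<m1. \<theta> j ^ (\<beta> j ^ 2)) *
            (\<Sum>i<m1. \<theta> i ^ (2 * \<beta> i + 1) * d i *
               grad_dot (u i) (\<lambda>y. mpow m1 (\<lambda>j. u j y) \<beta>) x))
       = (\<Sum>\<beta>\<in>multi_idx m1 (p - 2).
            multinom m1 p \<beta> * (\<Prod>j<m1. \<theta> j ^ (\<beta> j ^ 2)) *
            mpow m1 (\<lambda>j. u j x) \<beta> *
            (\<Sum>l\<in>UNIV. \<Sum>i<m1. \<Sum>j<m1.
               amat \<theta> d \<beta> i j * pderiv_at l (u i) x * pderiv_at l (u j) x))"
proof -
  \<comment> \<open>only differentiability at x is needed\<close>
  have diff: "u j differentiable (at x)" if "j < m1" for j
    using u_diff that .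
  have G_sym: "grad_dot (u i) (u j) x = grad_dot (u j) (u i) x" for i j
    by (simp add: grad_dot_def mult.commute)
  have quadratic_form: "(\<Sum>l\<in>UNIV. \<Sum>i<m1. \<Sum>j<m1. a i j * pderiv_at l (u i) x * pderiv_at l (u j) x)
      = (\<Sum>i<m1. \<Sum>j<m1. a i j * grad_dot (u i) (u j) x)" for a
    unfolding grad_dot_def sum_distrib_left by (simp add: sum.swap[of _ UNIV] mult_ac)
  have "p - 1 = Suc (p - 2)"
    using p by simp
  moreover have "(\<Sum>\<beta>\<in>multi_idx m1 (Suc (p - 2)). mweight m1 p \<theta> \<beta> *
      (\<Sum>i<m1. \<theta> i ^ (2 * \<beta> i + 1) * d i *
        (\<Sum>j<m1. real (\<beta> j) * mpow m1 (\<lambda>j. u j x) (\<beta>(j := \<beta> j - 1)) * grad_dot (u i) (u j) x)))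
    = (\<Sum>\<gamma>\<in>multi_idx m1 (p - 2). mweight m1 p \<theta> \<gamma> * mpow m1 (\<lambda>j. u j x) \<gamma> *
      (\<Sum>i<m1. \<Sum>j<m1. amat \<theta> d \<gamma> i j * grad_dot (u i) (u j) x))"
    by (rule mweight_gradient_identity) (rule G_sym)
  ultimately show ?thesis
    by (simp add: grad_dot_mpow[OF diff] quadratic_form mweight_def)
qed

end
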